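(* Let $(M,\mathbf g)$ be a $4$-dimensional space-time whose metric has the form $$\mathbf g=-\Big(1-\frac{2m(r)}{r}\Big)e^{\mu(r)}dt^2+\Big(1-\frac{2m(r)}{r}\Big)^{-1}dr^2+r^2(d\theta^2+\sin^2\theta\,d\phi^2)$$ for $0<r<\infty$, with $m$ and $\mu$ both $C^1$, piecewise $C^2$ functions of $r\in(0,\infty)$. If the following all hold: (1) the matter is a perfect fluid, i.e. $p_1(r)=p_2(r)=:p(r)$ (pressure) with density $\rho(r)$; (2) $\lim_{r\to\infty}4\pi r^2p(r)=\lim_{r\to\infty}4\pi r^2\rho(r)=0$; (3) $\tfrac{24}{7}m(r)<r$ for all $r\in(0,\infty)$; (4) $p(r)\le\rho(r)/3$ for all $r\in(0,\infty)$, then $(M,\mathbf g)$ contains no $SO(3)\times\mathbb R$-invariant timelike photon surfaces.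
   Context: With primes denoting $d/dr$, the functions $\rho,p_1,p_2$ are defined by $8\pi\rho=\frac{2m'}{r^2}$, $8\pi p_1=\frac{1}{r^2}\{(r-2m)\mu'-2m'\}$, $8\pi p_2=\frac{1}{4r^2}\{2(r+m-3rm')\mu'+r(r-2m)(\mu')^2-4rm''+2r(r-2m)\mu''\}$, so that the Einstein tensor is $G^a{}_b=8\pi\,\mathrm{diag}(-\rho,p_1,p_2,p_2)$ in coordinates $(t,r,\theta,\phi)$. A function on an interval $I$ is piecewise $C^k$ if $I$ is the disjoint union of a locally finite collection of intervals $I_i$ (open, closed or half-open) with $f|_{I_i}$ of class $C^k$. The metric admits the isometry group $SO(3)\times\mathbb R$ (rotations and $t$-translations); a hypersurface is $SO(3)\times\mathbb R$-invariant if each group element maps it onto itself. A photon surface of $(M,\mathbf g)$ is an immersed, nowhere-spacelike hypersurface $S$ such that for every $p\in S$ and every null vector $\mathbf k\in T_pS$ there exists a null geodesic $\gamma:(-\epsilon,\epsilon)\to M$ of $(M,\mathbf g)$ with $\dot\gamma(0)=\mathbf k$ and image contained in $S$. *)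

theory Defs
  imports "HOL-Analysis.Analysis"
begin

type_synonym pt = "real \<times> (real^3)"   (* (t, y) with y = r * (point of S^2), r = norm y *)

definition C1_on :: "real set \<Rightarrow> (real \<Rightarrow> real) \<Rightarrow> bool" where
  "C1_on I f \<longleftrightarrow> (\<exists>f'. (\<forall>x\<in>I. (f has_real_derivative f' x) (at x)) \<and> continuous_on I f')"

definition C2_restr :: "real set \<Rightarrow> (real \<Rightarrow> real) \<Rightarrow> bool" where
  "C2_restr J f \<longleftrightarrow> (\<exists>f1 f2. (\<forall>x\<in>J. (f has_real_derivative f1 x) (at x within J)
        \<and> (f1 has_real_derivative f2 x) (at x within J)) \<and> continuous_on J f2)"

definition piecewise_C2 :: "real set \<Rightarrow> (real \<Rightarrow> real) \<Rightarrow> bool" where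
  "piecewise_C2 I f \<longleftrightarrow> (\<exists>\<I>. (\<forall>J\<in>\<I>. is_interval J \<and> J \<noteq> {}) \<and> disjoint \<I> \<and> \<Union>\<I> = I
      \<and> (\<forall>x\<in>I. \<exists>e>0. finite {J\<in>\<I>. J \<inter> ball x e \<noteq> {}})
      \<and> (\<forall>J\<in>\<I>. C2_restr J f))"

text \<open>Matter functions (with primes = d/dr); second derivatives passed explicitly.\<close>

definition rho :: "(real \<Rightarrow> real) \<Rightarrow> real \<Rightarrow> real" where
  "rho m r = (2 * deriv m r / r\<^sup>2) / (8 * pi)"

definition p1 :: "(real \<Rightarrow> real) \<Rightarrow> (real \<Rightarrow> real) \<Rightarrow> real \<Rightarrow> real" where
  "p1 m mu r = (((r - 2 * m r) * deriv mu r - 2 * deriv m r) / r\<^sup>2) / (8 * pi)"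

definition p2 :: "(real \<Rightarrow> real) \<Rightarrow> (real \<Rightarrow> real) \<Rightarrow> real \<Rightarrow> real \<Rightarrow> real \<Rightarrow> real" where
  "p2 m mu m2 mu2 r = ((2 * (r + m r - 3 * r * deriv m r) * deriv mu r
        + r * (r - 2 * m r) * (deriv mu r)\<^sup>2 - 4 * r * m2 + 2 * r * (r - 2 * m r) * mu2)
        / (4 * r\<^sup>2)) / (8 * pi)"

text \<open>The space-time M = R x (R^3 - {0}) with the metric in Cartesian-type coordinates:
  r = |y|, dr = (y.dy)/r, r^2 (d theta^2 + sin^2 theta d phi^2) = |dy|^2 - dr^2.\<close>

definition spacetime :: "pt set" where
  "spacetime = {(t, y). y \<noteq> 0}"

definition metric :: "(real \<Rightarrow> real) \<Rightarrow> (real \<Rightarrow> real) \<Rightarrow> pt \<Rightarrow> pt \<Rightarrow> pt \<Rightarrow> real" where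
  "metric m mu p v w =
     (let y = snd p; r = norm y; F = 1 - 2 * m r / r;
          a = fst v; u = snd v; b = fst w; z = snd w
      in - F * exp (mu r) * a * b + (1 / F) * (y \<bullet> u) * (y \<bullet> z) / r\<^sup>2
         + (u \<bullet> z) - (y \<bullet> u) * (y \<bullet> z) / r\<^sup>2)"

definition dmetric :: "(real \<Rightarrow> real) \<Rightarrow> (real \<Rightarrow> real) \<Rightarrow> pt \<Rightarrow> pt \<Rightarrow> pt \<Rightarrow> real" where
  "dmetric m mu p w v = deriv (\<lambda>h. metric m mu (p + h *\<^sub>R w) v v) 0"

text \<open>Geodesic on (-eps, eps): Euler-Lagrange form of the geodesic equation,
  d/ds g(gamma', w) = 1/2 (d_w g)(gamma', gamma') for every constant vector w.\<close>
definition geodesic :: "(real \<Rightarrow> real) \<Rightarrow> (real \<Rightarrow> real) \<Rightarrow> (real \<Rightarrow> pt) \<Rightarrow> real \<Rightarrow> bool" where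
  "geodesic m mu \<gamma> eps \<longleftrightarrow> eps > 0 \<and> (\<forall>s\<in>{-eps<..<eps}. \<gamma> s \<in> spacetime) \<and>
     (\<exists>v. \<forall>s\<in>{-eps<..<eps}. (\<gamma> has_vector_derivative v s) (at s) \<and>
        (\<forall>w. ((\<lambda>s. metric m mu (\<gamma> s) (v s) w) has_real_derivative
               (1/2 * dmetric m mu (\<gamma> s) w (v s))) (at s)))"

text \<open>An immersed hypersurface, given as a countable family of C^1 immersions
  phi_i : U_i -> M (U_i open in R^3) with derivatives Dphi_i; S is the union of the images.
  (Equivalently: an immersion of the disjoint union of the U_i, i.e. of a second countable
  3-manifold.)\<close>
definition immersed_hypersurface ::
  "pt set \<Rightarrow> (nat \<Rightarrow> (real^3) set) \<Rightarrow> (nat \<Rightarrow> real^3 \<Rightarrow> pt) \<Rightarrow> (nat \<Rightarrow> real^3 \<Rightarrow> real^3 \<Rightarrow> pt) \<Rightarrow> bool" where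
  "immersed_hypersurface S U \<phi> D \<longleftrightarrow>
     S = (\<Union>i. \<phi> i ` U i) \<and> S \<subseteq> spacetime \<and>
     (\<forall>i. open (U i) \<and>
        (\<forall>u\<in>U i. (\<phi> i has_derivative D i u) (at u) \<and> inj (D i u)) \<and>
        (\<forall>z. continuous_on (U i) (\<lambda>u. D i u z)))"

definition timelike_photon_surface :: "(real \<Rightarrow> real) \<Rightarrow> (real \<Rightarrow> real) \<Rightarrow> pt set \<Rightarrow> bool" where
  "timelike_photon_surface m mu S \<longleftrightarrow> S \<noteq> {} \<and>
     (\<exists>U \<phi> D. immersed_hypersurface S U \<phi> D \<and>
       (\<forall>i. \<forall>u\<in>U i. \<exists>z. metric m mu (\<phi> i u) (D i u z) (D i u z) < 0) \<and>
       (\<forall>i. \<forall>u\<in>U i. \<forall>k\<in>range (D i u).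
          k \<noteq> 0 \<and> metric m mu (\<phi> i u) k k = 0 \<longrightarrow>
          (\<exists>\<gamma> eps. geodesic m mu \<gamma> eps \<and> \<gamma> 0 = \<phi> i u \<and>
             (\<gamma> has_vector_derivative k) (at 0) \<and> \<gamma> ` {-eps<..<eps} \<subseteq> S)))"

definition rotation3 :: "(real^3 \<Rightarrow> real^3) \<Rightarrow> bool" where
  "rotation3 f \<longleftrightarrow> orthogonal_transformation f \<and> det (matrix f) = 1"

definition SO3R_invariant :: "pt set \<Rightarrow> bool" where
  "SO3R_invariant S \<longleftrightarrow>
     (\<forall>f \<tau>. rotation3 f \<longrightarrow> (\<lambda>(t, y). (t + \<tau>, f y)) ` S = S)"

end

theory Submission
  imports Defs "HOL-Library.Quadratic_Discriminant"
begin

(* A hypersurface invariant under rotations and time translations is a union of cylinders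
   R x {|y| = r}; as an immersed hypersurface it is negligible, so it contains no open shell
   and |y| is constant along every curve in it. A timelike photon surface contains a null
   tangent vector with nonzero time component, and the null geodesic it generates stays in
   the surface, hence has constant radius r0. Differentiating y . y' = 0 along it yields the
   photon sphere condition 2 N^2 = r (N^2)' at r0, where N^2 = (1 - 2m/r) e^mu; equivalently
   h(r) = r - 3m - r Q vanishes at r0, where Q = 4 pi r^2 p.
   Eliminating mu'' with the isotropy equation p1 = p2 expresses h' through m, m' and Q. At a
   zero of h the bound 24m/7 < r gives Q > 1/8, and p <= rho/3 gives m' >= 3Q, so
   h' = 1 - 2 (m' + Q) < 0: h decreases through each of its zeros. As Q -> 0, h > 0 for large
   r, so h has no zeros at all. *)

section \<open>Real analysis\<close>

lemma C1_onD:
  assumes "C1_on I f"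
  shows C1_on_has_derivative: "x \<in> I \<Longrightarrow> (f has_real_derivative deriv f x) (at x)"
    and C1_on_continuous_deriv: "continuous_on I (deriv f)"
    and C1_on_continuous: "continuous_on I f"
proof -
  obtain f' where f': "\<forall>x\<in>I. (f has_real_derivative f' x) (at x)" and "continuous_on I f'"
    using assms unfolding C1_on_def by blast
  then have deriv_eq: "\<forall>x\<in>I. deriv f x = f' x"
    using DERIV_imp_deriv by blast
  show "x \<in> I \<Longrightarrow> (f has_real_derivative deriv f x) (at x)"
    using f' deriv_eq by simp
  have "continuous_on I (deriv f) \<longleftrightarrow> continuous_on I f'"
    by (rule continuous_on_cong) (simp_all add: deriv_eq)
  with \<open>continuous_on I f'\<close> show "continuous_on I (deriv f)"
    by simp
  show "continuous_on I f"
    using f' by (meson DERIV_continuous continuous_at_imp_continuous_on)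
qed

lemma mem_interior_interval_real:
  fixes J :: "real set"
  assumes J: "is_interval J" "x \<in> J" and "x \<noteq> Inf J" "x \<noteq> Sup J"
  shows "x \<in> interior J"
proof -
  have "\<exists>b\<in>J. x < b"
  proof (rule ccontr)
    assume "\<not> (\<exists>b\<in>J. x < b)"
    then have "Sup J = x"
      using J by (intro cSup_eq_maximum) (auto simp: not_less)
    with \<open>x \<noteq> Sup J\<close> show False by simp
  qed
  then obtain b where b: "b \<in> J" "x < b" by blast
  have "\<exists>a\<in>J. a < x"
  proof (rule ccontr)
    assume "\<not> (\<exists>a\<in>J. a < x)"
    then have "Inf J = x"
      using J by (intro cInf_eq_minimum) (auto simp: not_less)
    with \<open>x \<noteq> Inf J\<close> show False by simp
  qed
  then obtain a where a: "a \<in> J" "a < x" by blast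
  have "{a<..<b} \<subseteq> J"
    using J(1) a(1) b(1) unfolding is_interval_1 by fastforce
  then have "{a<..<b} \<subseteq> interior J"
    by (simp add: interior_maximal)
  with a b show ?thesis by auto
qed

lemma C2_restr_deriv_differentiable:
  assumes "C2_restr J f" and x: "x \<in> interior J"
  shows "deriv f differentiable (at x)"
proof -
  obtain f1 f2 where f12: "\<forall>y\<in>J. (f has_real_derivative f1 y) (at y within J)
      \<and> (f1 has_real_derivative f2 y) (at y within J)"
    using assms(1) unfolding C2_restr_def by blast
  have f1_eq: "f1 y = deriv f y" if "y \<in> interior J" for y
  proof -
    have "(f has_real_derivative f1 y) (at y within J)"
      using f12 that interior_subset by blast
    then show ?thesis
      using at_within_interior[OF that] by (simp add: DERIV_imp_deriv)
  qed
  have "(f1 has_real_derivative f2 x) (at x)"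
    using f12 x interior_subset at_within_interior[OF x] by (metis subsetD)
  then have "(deriv f has_real_derivative f2 x) (at x)"
    by (rule has_field_derivative_transform_within_open[OF _ open_interior x]) (rule f1_eq)
  then show ?thesis
    using real_differentiable_def by blast
qed

text \<open>Only finitely many pieces, hence finitely many endpoints, meet a small ball around \<open>z\<close>.\<close>
lemma piecewise_C2_eventually_deriv_differentiable:
  assumes pc: "piecewise_C2 I f" and "open I" and z: "z \<in> I"
  shows "\<forall>\<^sub>F x in at z. deriv f differentiable (at x)"
proof -
  obtain \<I> where intervals: "\<forall>J\<in>\<I>. is_interval J \<and> J \<noteq> {}" and cover: "\<Union>\<I> = I"
    and loc_fin: "\<forall>x\<in>I. \<exists>e>0. finite {J\<in>\<I>. J \<inter> ball x e \<noteq> {}}"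
    and C2: "\<forall>J\<in>\<I>. C2_restr J f"
    using pc unfolding piecewise_C2_def by blast
  obtain e where "e > 0" and fin: "finite {J\<in>\<I>. J \<inter> ball z e \<noteq> {}}"
    using loc_fin z by blast
  obtain e' where "e' > 0" "ball z e' \<subseteq> I"
    using \<open>open I\<close> z open_contains_ball by blast
  define ends where "ends = (\<Union>J\<in>{J\<in>\<I>. J \<inter> ball z e \<noteq> {}}. {Inf J, Sup J})"
  have "finite ends"
    unfolding ends_def using fin by blast
  then obtain d where "d > 0" and d: "\<forall>b\<in>ends. b \<noteq> z \<longrightarrow> d \<le> dist z b"
    using finite_set_avoid by blast
  have "deriv f differentiable (at x)" if x: "x \<noteq> z" "dist x z < min e (min e' d)" for x
  proof -
    have "x \<in> I"
      using x \<open>ball z e' \<subseteq> I\<close> by (auto simp: dist_commute)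
    then obtain J where J: "J \<in> \<I>" "x \<in> J"
      using cover by blast
    then have "J \<inter> ball z e \<noteq> {}"
      using x by (auto simp: dist_commute)
    moreover have "x \<notin> ends"
      using d x by (auto simp: dist_commute)
    ultimately have "x \<noteq> Inf J" "x \<noteq> Sup J"
      using J unfolding ends_def by auto
    then have "x \<in> interior J"
      using intervals J by (blast intro: mem_interior_interval_real)
    with C2 J(1) show ?thesis
      by (blast intro: C2_restr_deriv_differentiable)
  qed
  moreover have "min e (min e' d) > 0"
    using \<open>e > 0\<close> \<open>e' > 0\<close> \<open>d > 0\<close> by simp
  ultimately show ?thesis
    unfolding eventually_at by blast
qed

lemma DERIV_zero_if_constant_on_open:
  fixes f :: "real \<Rightarrow> real"
  assumes "open T" "s \<in> T" "\<forall>x\<in>T. f x = c" and "(f has_real_derivative D) (at s)"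
  shows "D = 0"
proof -
  have "(f has_real_derivative 0) (at s)"
    by (rule has_field_derivative_transform_within_open[OF DERIV_const assms(1,2)])
      (use assms(3) in simp)
  with assms(4) show ?thesis
    using DERIV_unique by blast
qed

lemma DERIV_power2_mult_continuous_at_0:
  fixes K :: "real \<Rightarrow> real"
  assumes "isCont K 0"
  shows "((\<lambda>h. h\<^sup>2 * K h) has_real_derivative 0) (at 0)"
proof -
  have "((\<lambda>h. h * K h) \<longlongrightarrow> 0 * K 0) (at 0)"
    using assms unfolding isCont_def by (intro tendsto_intros) auto
  moreover have "(\<lambda>h. (h\<^sup>2 * K h - 0\<^sup>2 * K 0) / (h - 0)) = (\<lambda>h. h * K h)"
    by (rule ext) (auto simp: power2_eq_square)
  ultimately show ?thesis
    unfolding has_field_derivative_iff by simp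
qed

lemma eventually_negative_right_of_zero:
  fixes h E :: "real \<Rightarrow> real"
  assumes "h z = 0" "isCont h z" "isCont E z" "E z < 0"
    and deriv: "\<forall>\<^sub>F x in at z. (h has_real_derivative E x) (at x)"
  shows "\<forall>\<^sub>F x in at_right z. h x < 0"
proof -
  have "\<forall>\<^sub>F x in at z. E x < 0"
    using assms(3,4) by (metis eventually_at_filter isCont_def order_tendstoD(2))
  with deriv have "\<forall>\<^sub>F x in at z. (h has_real_derivative E x) (at x) \<and> E x < 0"
    by eventually_elim blast
  then obtain d where "d > 0"
    and d: "\<And>x. x \<noteq> z \<Longrightarrow> dist x z < d \<Longrightarrow> (h has_real_derivative E x) (at x) \<and> E x < 0"
    unfolding eventually_at by blast
  have "h x < 0" if x: "z < x" "x < z + d" for x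
  proof -
    have near: "\<And>y. z < y \<Longrightarrow> y \<le> x \<Longrightarrow> (h has_real_derivative E y) (at y) \<and> E y < 0"
      using d x by (auto simp: dist_real_def)
    have "isCont h y" if "y \<in> {z..x}" for y
    proof (cases "y = z")
      case False
      with that near show ?thesis
        using DERIV_isCont by force
    qed (use \<open>isCont h z\<close> in simp)
    then have "continuous_on {z..x} h"
      by (intro continuous_at_imp_continuous_on) blast
    moreover have "\<exists>D. (h has_real_derivative D) (at y) \<and> D < 0" if "z < y" "y < x" for y
      using near that by force
    ultimately have "h x < h z"
      using DERIV_neg_imp_decreasing_open[OF \<open>z < x\<close>] by blast
    with \<open>h z = 0\<close> show ?thesis by simp
  qed
  then show ?thesis
    unfolding eventually_at_right_field using \<open>d > 0\<close> by (intro exI[of _ "z + d"]) auto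
qed

text \<open>To the right of its largest zero in \<open>[x, R]\<close>, where \<open>h R > 0\<close>, the function would have
  to vanish once more.\<close>
lemma no_zero_if_negative_right_of_zeros:
  fixes h :: "real \<Rightarrow> real"
  assumes cont: "continuous_on {a..} h" and pos: "\<forall>\<^sub>F x in at_top. h x > 0"
    and right: "\<And>z. z \<ge> a \<Longrightarrow> h z = 0 \<Longrightarrow> \<forall>\<^sub>F x in at_right z. h x < 0"
    and "x \<ge> a"
  shows "h x \<noteq> 0"
proof
  assume "h x = 0"
  obtain R where "R > x" "h R > 0"
    using pos eventually_at_top_linorder[of "\<lambda>x. h x > 0"]
    by (metis gt_ex le_less_trans less_le_not_le nle_le)
  define Z where "Z = {y \<in> {x..R}. h y = 0}"
  have cont_xR: "continuous_on {x..R} h"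
    by (rule continuous_on_subset[OF cont]) (use \<open>x \<ge> a\<close> in auto)
  have "closed Z"
    unfolding Z_def by (rule continuous_closed_preimage_constant[OF cont_xR closed_atLeastAtMost])
  then have "compact Z"
    unfolding compact_eq_bounded_closed Z_def
    by (auto intro: bounded_subset[OF bounded_closed_interval])
  moreover have "x \<in> Z"
    using \<open>h x = 0\<close> \<open>R > x\<close> unfolding Z_def by auto
  ultimately obtain z where "z \<in> Z" and z_max: "\<And>y. y \<in> Z \<Longrightarrow> y \<le> z"
    using compact_attains_sup by (metis empty_iff)
  then have z: "x \<le> z" "z < R" "h z = 0"
    using \<open>h R > 0\<close> unfolding Z_def by force+
  obtain b where "b > z" and neg: "\<And>y. z < y \<Longrightarrow> y < b \<Longrightarrow> h y < 0"
    using right[OF _ \<open>h z = 0\<close>] \<open>x \<ge> a\<close> \<open>x \<le> z\<close>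
    unfolding eventually_at_right_field by force
  define y where "y = (z + min b R) / 2"
  have y: "z < y" "y < R" "h y < 0"
    using \<open>b > z\<close> \<open>z < R\<close> neg unfolding y_def by auto
  have "continuous_on {y..R} h"
    by (rule continuous_on_subset[OF cont_xR]) (use z y in auto)
  then obtain w where "y \<le> w" "w \<le> R" "h w = 0"
    using IVT'[of h y 0 R] y \<open>h R > 0\<close> by auto
  then have "w \<in> Z"
    using z y unfolding Z_def by auto
  with z_max \<open>z < y\<close> \<open>y \<le> w\<close> show False by fastforce
qed

lemma norm_add_scaleR_has_real_derivative:
  fixes y e :: "'a::real_inner"
  assumes "y \<noteq> 0"
  shows "((\<lambda>h. norm (y + h *\<^sub>R e)) has_real_derivative (y \<bullet> e) / norm y) (at 0)"
proof -
  have "((\<lambda>h::real. y + h *\<^sub>R e) has_derivative (\<lambda>h. h *\<^sub>R e)) (at 0)"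
    by (auto intro!: derivative_eq_intros)
  moreover have "(norm has_derivative (\<lambda>v. v \<bullet> sgn y)) (at (y + 0 *\<^sub>R e))"
    using has_derivative_norm[OF assms] by simp
  ultimately have "((\<lambda>h. norm (y + h *\<^sub>R e)) has_derivative (\<lambda>h. (h *\<^sub>R e) \<bullet> sgn y)) (at 0)"
    by (rule has_derivative_compose)
  moreover have "(\<lambda>h. (h *\<^sub>R e) \<bullet> sgn y) = (*) ((y \<bullet> e) / norm y)"
    unfolding sgn_div_norm by (auto simp: inner_commute field_simps)
  ultimately show ?thesis
    unfolding has_field_derivative_def by simp
qed

lemma constant_norm_orthogonal_velocity:
  fixes Y :: "real \<Rightarrow> 'a::real_inner"
  assumes "open I" "s \<in> I" "\<forall>x\<in>I. norm (Y x) = c" and Y': "(Y has_vector_derivative u) (at s)"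
  shows "Y s \<bullet> u = 0"
proof -
  have "((\<lambda>x. Y x \<bullet> Y x) has_derivative (\<lambda>h. Y s \<bullet> (h *\<^sub>R u) + (h *\<^sub>R u) \<bullet> Y s)) (at s)"
    using Y' unfolding has_vector_derivative_def by (intro has_derivative_inner)
  moreover have "(\<lambda>h. Y s \<bullet> (h *\<^sub>R u) + (h *\<^sub>R u) \<bullet> Y s) = (*) (2 * (Y s \<bullet> u))"
    by (auto simp: inner_commute)
  ultimately have deriv: "((\<lambda>x. Y x \<bullet> Y x) has_real_derivative 2 * (Y s \<bullet> u)) (at s)"
    unfolding has_field_derivative_def by simp
  have "\<forall>x\<in>I. Y x \<bullet> Y x = c\<^sup>2"
    using assms(3) by (simp flip: power2_norm_eq_inner)
  from DERIV_zero_if_constant_on_open[OF assms(1,2) this deriv] show ?thesis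
    by simp
qed

lemma orthogonal_velocity_acceleration:
  fixes Y u :: "real \<Rightarrow> 'a::real_inner"
  assumes "open I" "s \<in> I" "\<forall>x\<in>I. Y x \<bullet> u x = 0"
    and "(Y has_vector_derivative u s) (at s)" "(u has_vector_derivative w) (at s)"
  shows "u s \<bullet> u s + Y s \<bullet> w = 0"
proof -
  have "((\<lambda>x. Y x \<bullet> u x) has_derivative (\<lambda>h. Y s \<bullet> (h *\<^sub>R w) + (h *\<^sub>R u s) \<bullet> u s)) (at s)"
    using assms(4,5) unfolding has_vector_derivative_def by (intro has_derivative_inner)
  moreover have "(\<lambda>h. Y s \<bullet> (h *\<^sub>R w) + (h *\<^sub>R u s) \<bullet> u s) = (*) (u s \<bullet> u s + Y s \<bullet> w)"
    by (simp add: fun_eq_iff algebra_simps)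
  ultimately have "((\<lambda>x. Y x \<bullet> u x) has_real_derivative u s \<bullet> u s + Y s \<bullet> w) (at s)"
    unfolding has_field_derivative_def by simp
  with assms(1-3) show ?thesis
    by (rule DERIV_zero_if_constant_on_open)
qed

section \<open>The photon sphere function\<close>

text \<open>\<open>scaled_pressure\<close> is \<open>4\<pi>r\<^sup>2p\<^sub>1\<close> and \<open>lapse_sq\<close> is \<open>-g\<^sub>t\<^sub>t\<close>; the zeros of
  \<open>photon_sphere_fn\<close> are the radii of photon spheres.\<close>

definition scaled_pressure :: "(real \<Rightarrow> real) \<Rightarrow> (real \<Rightarrow> real) \<Rightarrow> real \<Rightarrow> real" where
  "scaled_pressure m mu r = ((r - 2 * m r) * deriv mu r - 2 * deriv m r) / 2"

definition lapse_sq :: "(real \<Rightarrow> real) \<Rightarrow> (real \<Rightarrow> real) \<Rightarrow> real \<Rightarrow> real" where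
  "lapse_sq m mu r = (1 - 2 * m r / r) * exp (mu r)"

definition photon_sphere_fn :: "(real \<Rightarrow> real) \<Rightarrow> (real \<Rightarrow> real) \<Rightarrow> real \<Rightarrow> real" where
  "photon_sphere_fn m mu r = r - 3 * m r - r * scaled_pressure m mu r"

text \<open>The derivative of \<open>photon_sphere_fn\<close> after eliminating \<open>\<mu>''\<close> with the isotropy
  equation \<open>p\<^sub>1 = p\<^sub>2\<close>.\<close>
definition photon_sphere_fn_deriv :: "(real \<Rightarrow> real) \<Rightarrow> (real \<Rightarrow> real) \<Rightarrow> real \<Rightarrow> real" where
  "photon_sphere_fn_deriv m mu r =
     1 - 3 * (deriv m r + scaled_pressure m mu r)
     + (deriv m r + scaled_pressure m mu r) * (m r + r * scaled_pressure m mu r) / (r - 2 * m r)"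

lemma scaled_pressure_eq: "r \<noteq> 0 \<Longrightarrow> 4 * pi * r\<^sup>2 * p1 m mu r = scaled_pressure m mu r"
  unfolding p1_def scaled_pressure_def by (simp add: field_simps)

lemma scaled_pressure_le_deriv_mass:
  assumes "r > 0" "p1 m mu r \<le> rho m r / 3"
  shows "scaled_pressure m mu r \<le> deriv m r / 3"
proof -
  have "4 * pi * r\<^sup>2 * p1 m mu r \<le> 4 * pi * r\<^sup>2 * (rho m r / 3)"
    using assms(2) by (intro mult_left_mono) auto
  also have "\<dots> = deriv m r / 3"
    using assms(1) unfolding rho_def by (simp add: field_simps)
  finally show ?thesis
    using scaled_pressure_eq[of r] assms(1) by simp
qed

lemma lapse_sq_has_derivative:
  assumes "r \<noteq> 0" "(m has_real_derivative M) (at r)" "(mu has_real_derivative U) (at r)"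
  shows "(lapse_sq m mu has_real_derivative
      (2 * m r / r\<^sup>2 - 2 * M / r + (1 - 2 * m r / r) * U) * exp (mu r)) (at r)"
  unfolding lapse_sq_def[abs_def] using assms
  by (auto intro!: derivative_eq_intros simp: field_simps power2_eq_square)

lemma photon_sphere_fn_eq_0_iff:
  assumes "r > 0"
  shows "2 * lapse_sq m mu r =
      r * ((2 * m r / r\<^sup>2 - 2 * deriv m r / r + (1 - 2 * m r / r) * deriv mu r) * exp (mu r))
    \<longleftrightarrow> photon_sphere_fn m mu r = 0"
proof -
  have "r * (2 * m r / r\<^sup>2 - 2 * deriv m r / r + (1 - 2 * m r / r) * deriv mu r)
      = 2 * m r / r - 2 * deriv m r + (r - 2 * m r) * deriv mu r"
    using assms by (simp add: field_simps power2_eq_square)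
  then have "2 * lapse_sq m mu r =
      r * ((2 * m r / r\<^sup>2 - 2 * deriv m r / r + (1 - 2 * m r / r) * deriv mu r) * exp (mu r))
    \<longleftrightarrow> 2 * (1 - 2 * m r / r) = 2 * m r / r - 2 * deriv m r + (r - 2 * m r) * deriv mu r"
    unfolding lapse_sq_def by (simp add: mult.assoc[symmetric])
  also have "\<dots> \<longleftrightarrow> photon_sphere_fn m mu r = 0"
    unfolding photon_sphere_fn_def scaled_pressure_def using assms
    by (simp add: field_simps)
  finally show ?thesis .
qed

lemma scaled_pressure_continuous_on:
  assumes "C1_on I m" "C1_on I mu"
  shows "continuous_on I (scaled_pressure m mu)"
  unfolding scaled_pressure_def[abs_def]
  by (intro continuous_intros C1_on_continuous[OF assms(1)] C1_on_continuous_deriv[OF assms(1)]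
      C1_on_continuous_deriv[OF assms(2)]) auto

lemma photon_sphere_fn_continuous_on:
  assumes "C1_on I m" "C1_on I mu"
  shows "continuous_on I (photon_sphere_fn m mu)"
  unfolding photon_sphere_fn_def[abs_def]
  by (intro continuous_intros C1_on_continuous[OF assms(1)] scaled_pressure_continuous_on[OF assms])

lemma photon_sphere_fn_deriv_continuous_on:
  assumes "C1_on I m" "C1_on I mu" "\<forall>r\<in>I. 2 * m r \<noteq> r"
  shows "continuous_on I (photon_sphere_fn_deriv m mu)"
  unfolding photon_sphere_fn_deriv_def[abs_def] using assms(3)
  by (intro continuous_intros C1_on_continuous[OF assms(1)] C1_on_continuous_deriv[OF assms(1)]
      scaled_pressure_continuous_on[OF assms(1,2)]) auto

lemma photon_sphere_fn_has_derivative: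
  assumes "r > 0" and "2 * m r \<noteq> r"
    and dm: "(m has_real_derivative deriv m r) (at r)"
    and dm2: "(deriv m has_real_derivative m2) (at r)"
    and dmu2: "(deriv mu has_real_derivative mu2) (at r)"
    and isotropic: "p1 m mu r = p2 m mu m2 mu2 r"
  shows "(photon_sphere_fn m mu has_real_derivative photon_sphere_fn_deriv m mu r) (at r)"
proof -
  let ?m = "m r" and ?n = "deriv m r" and ?u = "deriv mu r"
  have D: "(photon_sphere_fn m mu has_real_derivative
      1 - 3 * ?n - ((r - 2 * ?m) * ?u - 2 * ?n) / 2
      - r * ((1 - 2 * ?n) * ?u + (r - 2 * ?m) * mu2 - 2 * m2) / 2) (at r)"
    unfolding photon_sphere_fn_def[abs_def] scaled_pressure_def
    by (rule derivative_eq_intros dm dm2 dmu2 refl | simp)+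
  let ?B = "2 * (r + ?m - 3 * r * ?n) * ?u + r * (r - 2 * ?m) * ?u\<^sup>2 - 4 * r * m2
        + 2 * r * (r - 2 * ?m) * mu2"
  have "4 * ((r - 2 * ?m) * ?u - 2 * ?n) = 4 * r\<^sup>2 * (((r - 2 * ?m) * ?u - 2 * ?n) / r\<^sup>2)"
    using \<open>r > 0\<close> by simp
  also have "\<dots> = 4 * r\<^sup>2 * (?B / (4 * r\<^sup>2))"
    using isotropic[unfolded p1_def p2_def divide_cancel_right] by simp
  also have "\<dots> = ?B"
    using \<open>r > 0\<close> by simp
  finally have "4 * ((r - 2 * ?m) * ?u - 2 * ?n) = ?B" .
  then have mu2_eq: "mu2 = (4 * ((r - 2 * ?m) * ?u - 2 * ?n) - 2 * (r + ?m - 3 * r * ?n) * ?u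
        - r * (r - 2 * ?m) * ?u\<^sup>2 + 4 * r * m2) / (2 * r * (r - 2 * ?m))"
    using assms(1,2) by (simp add: field_simps)
  have "1 - 3 * ?n - ((r - 2 * ?m) * ?u - 2 * ?n) / 2
      - r * ((1 - 2 * ?n) * ?u + (r - 2 * ?m) * mu2 - 2 * m2) / 2 = photon_sphere_fn_deriv m mu r"
    using assms(1,2) unfolding photon_sphere_fn_deriv_def scaled_pressure_def mu2_eq
    by (simp add: field_simps power2_eq_square)
  with D show ?thesis by simp
qed

lemma photon_sphere_fn_eventually_has_derivative:
  fixes m mu :: "real \<Rightarrow> real"
  assumes reg_m: "C1_on {0<..} m" "piecewise_C2 {0<..} m"
    and reg_mu: "piecewise_C2 {0<..} mu"
    and fluid: "\<forall>r>0. \<forall>m2 mu2. (deriv m has_real_derivative m2) (at r)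
                   \<and> (deriv mu has_real_derivative mu2) (at r)
                   \<longrightarrow> p1 m mu r = p2 m mu m2 mu2 r"
    and subhorizon: "\<forall>r>0. 2 * m r < r" and "z > 0"
  shows "\<forall>\<^sub>F r in at z. (photon_sphere_fn m mu has_real_derivative photon_sphere_fn_deriv m mu r) (at r)"
proof -
  have "\<forall>\<^sub>F r in at z. r > 0 \<and> deriv m differentiable (at r) \<and> deriv mu differentiable (at r)"
    using order_tendstoD(1)[OF tendsto_ident_at \<open>z > 0\<close>] \<open>z > 0\<close> reg_m(2) reg_mu
    by (intro eventually_conj piecewise_C2_eventually_deriv_differentiable) auto
  then show ?thesis
  proof eventually_elim
    case (elim r)
    then obtain m2 mu2 where "(deriv m has_real_derivative m2) (at r)"
      "(deriv mu has_real_derivative mu2) (at r)"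
      by (auto simp: real_differentiable_def)
    with elim show ?case
      using fluid subhorizon C1_on_has_derivative[OF reg_m(1)]
      by (intro photon_sphere_fn_has_derivative) auto
  qed
qed

lemma photon_sphere_fn_deriv_neg_at_zero:
  assumes "r > 0" "24 / 7 * m r < r"
    and energy: "scaled_pressure m mu r \<le> deriv m r / 3"
    and zero: "photon_sphere_fn m mu r = 0"
  shows "photon_sphere_fn_deriv m mu r < 0"
proof -
  let ?Q = "scaled_pressure m mu r"
  have rQ: "r * ?Q = r - 3 * m r"
    using zero unfolding photon_sphere_fn_def by simp
  then have "r * ?Q > r * (1 / 8)"
    using assms(2) by simp
  then have "?Q > 1 / 8"
    using \<open>r > 0\<close> by simp
  have "r - 2 * m r > 0"
    using assms(1,2) by simp
  moreover have "m r + r * ?Q = r - 2 * m r"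
    using rQ by simp
  ultimately have "photon_sphere_fn_deriv m mu r = 1 - 2 * (deriv m r + ?Q)"
    unfolding photon_sphere_fn_deriv_def by (simp only:) simp
  with \<open>?Q > 1 / 8\<close> energy show ?thesis by simp
qed

lemma photon_sphere_fn_eventually_pos:
  assumes "((\<lambda>r. 4 * pi * r\<^sup>2 * p1 m mu r) \<longlongrightarrow> 0) at_top" and bound: "\<forall>r>0. 24 / 7 * m r < r"
  shows "\<forall>\<^sub>F r in at_top. photon_sphere_fn m mu r > 0"
proof -
  have "\<forall>\<^sub>F r in at_top. 4 * pi * r\<^sup>2 * p1 m mu r = scaled_pressure m mu r"
    using eventually_gt_at_top[of 0] by eventually_elim (simp add: scaled_pressure_eq)
  with assms(1) have "(scaled_pressure m mu \<longlongrightarrow> 0) at_top"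
    by (rule Lim_transform_eventually)
  then have "\<forall>\<^sub>F r in at_top. scaled_pressure m mu r < 1 / 8 \<and> r > 0"
    by (intro eventually_conj order_tendstoD(2) eventually_gt_at_top) auto
  then show ?thesis
  proof eventually_elim
    case (elim r)
    then have "r * scaled_pressure m mu r < r / 8" "3 * m r < 7 * r / 8"
      using bound by auto
    then show ?case
      unfolding photon_sphere_fn_def by simp
  qed
qed

lemma photon_sphere_fn_nonzero:
  fixes m mu :: "real \<Rightarrow> real"
  assumes reg_m: "C1_on {0<..} m" "piecewise_C2 {0<..} m"
    and reg_mu: "C1_on {0<..} mu" "piecewise_C2 {0<..} mu"
    and fluid: "\<forall>r>0. \<forall>m2 mu2. (deriv m has_real_derivative m2) (at r)
                   \<and> (deriv mu has_real_derivative mu2) (at r)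
                   \<longrightarrow> p1 m mu r = p2 m mu m2 mu2 r"
    and lim_p: "((\<lambda>r. 4 * pi * r\<^sup>2 * p1 m mu r) \<longlongrightarrow> 0) at_top"
    and bound: "\<forall>r>0. 24 / 7 * m r < r"
    and energy: "\<forall>r>0. p1 m mu r \<le> rho m r / 3"
    and "r > 0"
  shows "photon_sphere_fn m mu r \<noteq> 0"
proof -
  have subhorizon: "\<forall>r>0. 2 * m r < r"
    using bound by force
  have cont_h: "continuous_on {0<..} (photon_sphere_fn m mu)"
    using reg_m(1) reg_mu(1) by (rule photon_sphere_fn_continuous_on)
  have cont_E: "continuous_on {0<..} (photon_sphere_fn_deriv m mu)"
    using reg_m(1) reg_mu(1) subhorizon by (intro photon_sphere_fn_deriv_continuous_on) auto
  have "\<forall>\<^sub>F x in at_right z. photon_sphere_fn m mu x < 0"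
    if "r \<le> z" "photon_sphere_fn m mu z = 0" for z
  proof (rule eventually_negative_right_of_zero)
    have "z > 0"
      using \<open>r > 0\<close> that by simp
    then show "isCont (photon_sphere_fn m mu) z" "isCont (photon_sphere_fn_deriv m mu) z"
      using cont_h cont_E by (simp_all add: continuous_on_eq_continuous_at)
    show "photon_sphere_fn_deriv m mu z < 0"
      using \<open>z > 0\<close> bound energy that
      by (intro photon_sphere_fn_deriv_neg_at_zero scaled_pressure_le_deriv_mass) auto
    show "\<forall>\<^sub>F x in at z. (photon_sphere_fn m mu has_real_derivative
        photon_sphere_fn_deriv m mu x) (at x)"
      using reg_m reg_mu(2) fluid subhorizon \<open>z > 0\<close>
      by (rule photon_sphere_fn_eventually_has_derivative)
  qed (use that in simp)
  moreover have "continuous_on {r..} (photon_sphere_fn m mu)"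
    by (rule continuous_on_subset[OF cont_h]) (use \<open>r > 0\<close> in auto)
  ultimately show ?thesis
    using photon_sphere_fn_eventually_pos[OF lim_p bound]
    by (intro no_zero_if_negative_right_of_zeros[of r]) auto
qed

section \<open>Invariant hypersurfaces and their null tangent vectors\<close>

lemma immersed_hypersurface_negligible:
  assumes "immersed_hypersurface S U \<phi> D"
  shows "negligible S"
proof -
  have S: "S = (\<Union>i. \<phi> i ` U i)" and "\<forall>i. \<forall>u\<in>U i. (\<phi> i has_derivative D i u) (at u)"
    using assms unfolding immersed_hypersurface_def by auto
  then have "\<phi> i differentiable_on U i" for i
    unfolding differentiable_on_def by (meson differentiableI differentiable_at_withinI)
  then have "negligible (\<phi> i ` U i)" for i
    by (intro negligible_differentiable_image_lowdim) simp_all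
  then show ?thesis
    unfolding S by (intro negligible_countable_Union) auto
qed

lemma timelike_photon_surface_negligible: "timelike_photon_surface m mu S \<Longrightarrow> negligible S"
  unfolding timelike_photon_surface_def using immersed_hypersurface_negligible by blast

lemma SO3R_invariant_same_radius:
  assumes inv: "SO3R_invariant S" and "p \<in> S" and "norm (snd q) = norm (snd p)"
  shows "q \<in> S"
proof -
  obtain f where f: "orthogonal_transformation f" "det (matrix f) = 1" "f (snd p) = snd q"
    using rotation_exists[of "snd p" "snd q"] assms(3) by auto
  define g where "g = (\<lambda>(t, y). (t + (fst q - fst p), f y))"
  have "g ` S = S"
    using inv f(1,2) unfolding SO3R_invariant_def rotation3_def g_def by blast
  moreover have "g p = q"
    using f(3) unfolding g_def by (simp add: case_prod_beta prod_eq_iff)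
  ultimately show ?thesis
    using \<open>p \<in> S\<close> by blast
qed

lemma shell_not_negligible:
  assumes "0 \<le> c" "c < d"
  shows "\<not> negligible {p :: pt. c < norm (snd p) \<and> norm (snd p) < d}"
proof (rule open_not_negligible)
  show "open {p :: pt. c < norm (snd p) \<and> norm (snd p) < d}"
    by (intro open_Collect_conj open_Collect_less continuous_intros)
  have "(0, ((c + d) / 2) *\<^sub>R axis 1 1) \<in> {p :: pt. c < norm (snd p) \<and> norm (snd p) < d}"
    using assms by (simp add: abs_of_nonneg)
  then show "{p :: pt. c < norm (snd p) \<and> norm (snd p) < d} \<noteq> {}"
    by blast
qed

text \<open>Otherwise \<open>S\<close> would contain an open spherical shell.\<close>
lemma SO3R_invariant_negligible_radius_constant:
  fixes g :: "real \<Rightarrow> pt"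
  assumes inv: "SO3R_invariant S" and "negligible S"
    and "connected T" "continuous_on T g" "g ` T \<subseteq> S" "a \<in> T" "b \<in> T"
  shows "norm (snd (g a)) = norm (snd (g b))"
proof (rule ccontr)
  define N where "N = (\<lambda>s. norm (snd (g s)))"
  define c where "c = min (N a) (N b)"
  define d where "d = max (N a) (N b)"
  assume "norm (snd (g a)) \<noteq> norm (snd (g b))"
  then have "c < d"
    unfolding c_def d_def N_def by auto
  have "connected (N ` T)"
    unfolding N_def using assms(3,4) by (intro connected_continuous_image continuous_intros)
  then have radii: "{c..d} \<subseteq> N ` T"
    using assms(6,7) unfolding connected_iff_interval c_def d_def
    by (auto simp: min_def max_def split: if_splits)
  have shell: "{p :: pt. c < norm (snd p) \<and> norm (snd p) < d} \<subseteq> S"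
  proof
    fix p :: pt
    assume "p \<in> {p. c < norm (snd p) \<and> norm (snd p) < d}"
    then have "norm (snd p) \<in> N ` T"
      using radii by auto
    then obtain s where "s \<in> T" "N s = norm (snd p)"
      by (metis imageE)
    moreover have "g s \<in> S"
      using assms(5) \<open>s \<in> T\<close> by blast
    ultimately show "p \<in> S"
      unfolding N_def by (metis SO3R_invariant_same_radius[OF inv])
  qed
  have "0 \<le> c"
    unfolding c_def N_def by simp
  from this \<open>c < d\<close> have "\<not> negligible {p :: pt. c < norm (snd p) \<and> norm (snd p) < d}"
    by (rule shell_not_negligible)
  with shell \<open>negligible S\<close> show False
    using negligible_subset by blast
qed

lemma metric_spatial:
  fixes y x :: "real^3"
  assumes "y \<noteq> 0" and "2 * m (norm y) < norm y"
  shows metric_spatial_nonneg: "metric m mu (t, y) (0, x) (0, x) \<ge> 0"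
    and metric_spatial_pos: "x \<noteq> 0 \<Longrightarrow> metric m mu (t, y) (0, x) (0, x) > 0"
proof -
  define r where "r = norm y"
  define F where "F = 1 - 2 * m r / r"
  have "r > 0" "F > 0"
    using assms unfolding r_def F_def by (auto simp: field_simps)
  have metric_eq: "metric m mu (t, y) (0, x) (0, x) = (y \<bullet> x)\<^sup>2 / (F * r\<^sup>2) + (x \<bullet> x - (y \<bullet> x)\<^sup>2 / r\<^sup>2)"
    unfolding metric_def Let_def r_def F_def by (simp add: power2_eq_square)
  have "\<bar>y \<bullet> x\<bar>\<^sup>2 \<le> (r * norm x)\<^sup>2"
    unfolding r_def by (intro power_mono Cauchy_Schwarz_ineq2) auto
  then have tangential: "x \<bullet> x - (y \<bullet> x)\<^sup>2 / r\<^sup>2 \<ge> 0"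
    using \<open>r > 0\<close> by (simp add: field_simps power_mult_distrib power2_norm_eq_inner)
  then show "metric m mu (t, y) (0, x) (0, x) \<ge> 0"
    unfolding metric_eq using \<open>F > 0\<close> by simp
  assume "x \<noteq> 0"
  show "metric m mu (t, y) (0, x) (0, x) > 0"
  proof (cases "y \<bullet> x = 0")
    case True
    with \<open>x \<noteq> 0\<close> show ?thesis
      unfolding metric_eq by simp
  next
    case False
    with \<open>F > 0\<close> \<open>r > 0\<close> tangential show ?thesis
      unfolding metric_eq by (simp add: add_pos_nonneg)
  qed
qed

lemma metric_add_scaleR:
  "metric m mu p (v + c *\<^sub>R w) (v + c *\<^sub>R w) =
     metric m mu p v v + 2 * c * metric m mu p v w + c\<^sup>2 * metric m mu p w w"
  unfolding metric_def Let_def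
  by (simp add: inner_add_left inner_add_right inner_commute power2_eq_square algebra_simps
      add_divide_distrib diff_divide_distrib)

lemma linear_lowdim_kernel_nonzero:
  fixes f :: "'a::euclidean_space \<Rightarrow> 'b::euclidean_space"
  assumes "linear f" and "DIM('b) < DIM('a)"
  obtains z where "z \<noteq> 0" "f z = 0"
proof -
  have "\<not> inj f"
  proof
    assume "inj f"
    then have "dim (f ` UNIV) = DIM('a)"
      using assms(1) by (simp add: dim_image_eq)
    moreover have "dim (f ` UNIV) \<le> DIM('b)"
      by (rule dim_subset_UNIV)
    ultimately show False
      using assms(2) by simp
  qed
  with assms(1) that show ?thesis
    by (auto simp: linear_injective_0)
qed

lemma metric_indefinite_has_null_combination:
  assumes "metric m mu p v v < 0" "metric m mu p w w > 0"
  obtains l where "metric m mu p (v + l *\<^sub>R w) (v + l *\<^sub>R w) = 0"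
proof -
  define A where "A = metric m mu p w w"
  define B where "B = metric m mu p v w"
  define C where "C = metric m mu p v v"
  have "A * C < 0"
    unfolding A_def C_def using assms by (simp add: mult_pos_neg)
  then have "discrim A (2 * B) C \<ge> 0"
    unfolding discrim_def
    by (simp add: power_mult_distrib) (metis less_imp_le order_trans zero_le_power2)
  then obtain l where "A * l\<^sup>2 + 2 * B * l + C = 0"
    using discriminant_nonneg_ex[of A "2 * B" C] assms(2) unfolding A_def by auto
  then show ?thesis
    using that[of l] unfolding A_def B_def C_def metric_add_scaleR by (simp add: algebra_simps)
qed

text \<open>The kernel of the time component supplies a nonzero spatial vector; on its span with the
  timelike vector the metric is indefinite.\<close>
lemma timelike_range_has_null_vector:
  fixes D :: "real^3 \<Rightarrow> pt"
  assumes "linear D" "inj D" "y \<noteq> 0" "2 * m (norm y) < norm y"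
    and timelike: "metric m mu (t, y) (D z) (D z) < 0"
  obtains k where "k \<in> range D" "metric m mu (t, y) k k = 0" "fst k \<noteq> 0"
proof -
  have "linear (\<lambda>z. fst (D z))"
    using linear_compose[OF assms(1) linear_fst] by (simp add: o_def)
  then obtain z' where "z' \<noteq> 0" "fst (D z') = 0"
    by (rule linear_lowdim_kernel_nonzero) simp
  then have "D z' = (0, snd (D z'))" "snd (D z') \<noteq> 0"
    using assms(1,2) by (auto simp: prod_eq_iff linear_injective_0)
  then have "metric m mu (t, y) (D z') (D z') > 0"
    using metric_spatial_pos[where m=m and mu=mu and t=t, OF assms(3,4)] by metis
  with timelike obtain l where "metric m mu (t, y) (D z + l *\<^sub>R D z') (D z + l *\<^sub>R D z') = 0"
    by (rule metric_indefinite_has_null_combination)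
  moreover have "D z + l *\<^sub>R D z' = D (z + l *\<^sub>R z')"
    using assms(1) by (simp add: linear_add linear_scale)
  moreover have "fst (D z) \<noteq> 0"
  proof
    assume "fst (D z) = 0"
    then have "D z = (0, snd (D z))"
      by (simp add: prod_eq_iff)
    then show False
      using metric_spatial_nonneg[where m=m and mu=mu and t=t, OF assms(3,4)] timelike
      by (metis not_le)
  qed
  then have "fst (D (z + l *\<^sub>R z')) \<noteq> 0"
    using assms(1) \<open>fst (D z') = 0\<close> by (simp add: linear_add linear_scale)
  ultimately show ?thesis
    using that by (metis rangeI)
qed

lemma timelike_photon_surface_null_geodesic:
  assumes "timelike_photon_surface m mu S" and subhorizon: "\<forall>r>0. 2 * m r < r"
  obtains \<gamma> eps t0 Y0 a0 u0 where "geodesic m mu \<gamma> eps" "\<gamma> 0 = (t0, Y0)"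
    "(\<gamma> has_vector_derivative (a0, u0)) (at 0)" "a0 \<noteq> 0"
    "metric m mu (t0, Y0) (a0, u0) (a0, u0) = 0" "\<gamma> ` {-eps<..<eps} \<subseteq> S"
proof -
  obtain U \<phi> D where "S \<noteq> {}" and imm: "immersed_hypersurface S U \<phi> D"
    and timelike: "\<forall>i. \<forall>u\<in>U i. \<exists>z. metric m mu (\<phi> i u) (D i u z) (D i u z) < 0"
    and photon: "\<forall>i. \<forall>u\<in>U i. \<forall>k\<in>range (D i u). k \<noteq> 0 \<and> metric m mu (\<phi> i u) k k = 0 \<longrightarrow>
          (\<exists>\<gamma> eps. geodesic m mu \<gamma> eps \<and> \<gamma> 0 = \<phi> i u \<and>
             (\<gamma> has_vector_derivative k) (at 0) \<and> \<gamma> ` {-eps<..<eps} \<subseteq> S)"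
    using assms(1) unfolding timelike_photon_surface_def by blast
  obtain i u where "u \<in> U i"
    using \<open>S \<noteq> {}\<close> imm unfolding immersed_hypersurface_def by blast
  obtain t0 Y0 where q: "\<phi> i u = (t0, Y0)"
    by (metis prod.exhaust)
  have "\<phi> i u \<in> spacetime"
    using imm \<open>u \<in> U i\<close> unfolding immersed_hypersurface_def by blast
  then have "Y0 \<noteq> 0"
    unfolding q spacetime_def by simp
  moreover have "(\<phi> i has_derivative D i u) (at u)" "inj (D i u)"
    using imm \<open>u \<in> U i\<close> unfolding immersed_hypersurface_def by blast+
  moreover have "linear (D i u)"
    using has_derivative_linear calculation(2) by blast
  moreover obtain z where "metric m mu (t0, Y0) (D i u z) (D i u z) < 0"
    using timelike \<open>u \<in> U i\<close> q by metis
  ultimately obtain k where k: "k \<in> range (D i u)" "metric m mu (t0, Y0) k k = 0" "fst k \<noteq> 0"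
    using subhorizon timelike_range_has_null_vector by (metis zero_less_norm_iff)
  then have "k \<noteq> 0"
    by auto
  with photon \<open>u \<in> U i\<close> k q obtain \<gamma> eps where "geodesic m mu \<gamma> eps" "\<gamma> 0 = (t0, Y0)"
    "(\<gamma> has_vector_derivative k) (at 0)" "\<gamma> ` {-eps<..<eps} \<subseteq> S"
    by metis
  with k show ?thesis
    using that[of \<gamma> eps t0 Y0 "fst k" "snd k"] by simp
qed

section \<open>Null geodesics of constant radius\<close>

lemma geodesic_continuous_on: "geodesic m mu \<gamma> eps \<Longrightarrow> continuous_on {-eps<..<eps} \<gamma>"
  unfolding geodesic_def
  by (meson continuous_at_imp_continuous_on has_vector_derivative_continuous)

lemma SO3R_invariant_photon_surface_geodesic_radius:
  assumes "SO3R_invariant S" "timelike_photon_surface m mu S" "geodesic m mu \<gamma> eps"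
    and "\<gamma> ` {-eps<..<eps} \<subseteq> S" "s \<in> {-eps<..<eps}"
  shows "norm (snd (\<gamma> s)) = norm (snd (\<gamma> 0))"
proof (rule SO3R_invariant_negligible_radius_constant)
  show "negligible S"
    using assms(2) by (rule timelike_photon_surface_negligible)
  show "continuous_on {-eps<..<eps} \<gamma>"
    using assms(3) by (rule geodesic_continuous_on)
  show "0 \<in> {-eps<..<eps}"
    using assms(3) unfolding geodesic_def by simp
qed (use assms in auto)

text \<open>Along a spatial displacement the terms of \<open>g(k, k)\<close> involving \<open>y \<bullet> u\<^sub>0\<close> are quadratic
  in the displacement, so only \<open>g\<^sub>t\<^sub>t\<close> contributes to the derivative.\<close>
lemma dmetric_spatial_direction:
  fixes Y0 e u0 :: "real^3"
  assumes "Y0 \<noteq> 0" "Y0 \<bullet> u0 = 0" "isCont m (norm Y0)" "2 * m (norm Y0) \<noteq> norm Y0"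
    and L: "(lapse_sq m mu has_real_derivative L) (at (norm Y0))"
  shows "dmetric m mu (t0, Y0) (0, e) (a0, u0) = - a0\<^sup>2 * L * (Y0 \<bullet> e) / norm Y0"
proof -
  define r0 where "r0 = norm Y0"
  define n where "n = (\<lambda>h::real. norm (Y0 + h *\<^sub>R e))"
  define c where "c = e \<bullet> u0"
  have "r0 > 0" "n 0 = r0"
    using assms(1) unfolding r0_def n_def by simp_all
  have dn: "(n has_real_derivative (Y0 \<bullet> e) / r0) (at 0)"
    unfolding n_def r0_def using assms(1) by (rule norm_add_scaleR_has_real_derivative)
  define K where "K = (\<lambda>h. (1 / (1 - 2 * m (n h) / n h) - 1) * c\<^sup>2 / (n h)\<^sup>2)"
  have "isCont (\<lambda>h. m (n h)) 0"
    using DERIV_isCont[OF dn] assms(3) \<open>n 0 = r0\<close> r0_def by (simp add: isCont_o2)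
  then have "isCont K 0"
    unfolding K_def using DERIV_isCont[OF dn] \<open>n 0 = r0\<close> \<open>r0 > 0\<close> assms(4) r0_def
    by (intro continuous_intros) (auto simp: field_simps)
  have metric_eq: "(\<lambda>h. metric m mu ((t0, Y0) + h *\<^sub>R (0, e)) (a0, u0) (a0, u0))
      = (\<lambda>h. - a0\<^sup>2 * lapse_sq m mu (n h) + h\<^sup>2 * K h + u0 \<bullet> u0)"
  proof
    fix h
    have "(Y0 + h *\<^sub>R e) \<bullet> u0 = h * c"
      unfolding c_def using assms(2) by (simp add: inner_add_left)
    then show "metric m mu ((t0, Y0) + h *\<^sub>R (0, e)) (a0, u0) (a0, u0)
        = - a0\<^sup>2 * lapse_sq m mu (n h) + h\<^sup>2 * K h + u0 \<bullet> u0"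
      unfolding metric_def Let_def lapse_sq_def K_def n_def
      by (simp add: power2_eq_square algebra_simps diff_divide_distrib)
  qed
  have "((\<lambda>h. lapse_sq m mu (n h)) has_real_derivative L * ((Y0 \<bullet> e) / r0)) (at 0)"
    using DERIV_chain2[OF _ dn, of "lapse_sq m mu" L] L \<open>n 0 = r0\<close> r0_def by simp
  then have "((\<lambda>h. - a0\<^sup>2 * lapse_sq m mu (n h) + h\<^sup>2 * K h + u0 \<bullet> u0) has_real_derivative
      - a0\<^sup>2 * (L * ((Y0 \<bullet> e) / r0)) + 0 + 0) (at 0)"
    by (intro DERIV_add DERIV_cmult DERIV_const
        DERIV_power2_mult_continuous_at_0 \<open>isCont K 0\<close>)
  then show ?thesis
    unfolding dmetric_def metric_eq r0_def by (simp add: DERIV_imp_deriv)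
qed

lemma geodesic_spatial_velocity_has_vector_derivative:
  fixes \<gamma> v :: "real \<Rightarrow> pt"
  assumes "open I" "0 \<in> I"
    and geodesic_eq: "\<forall>s\<in>I. \<forall>w. ((\<lambda>s. metric m mu (\<gamma> s) (v s) w) has_real_derivative
          1/2 * dmetric m mu (\<gamma> s) w (v s)) (at s)"
    and orth: "\<forall>s\<in>I. snd (\<gamma> s) \<bullet> snd (v s) = 0"
    and "\<gamma> 0 = (t0, Y0)" "v 0 = (a0, u0)" "Y0 \<noteq> 0" "isCont m (norm Y0)"
    and "2 * m (norm Y0) \<noteq> norm Y0"
    and L: "(lapse_sq m mu has_real_derivative L) (at (norm Y0))"
  shows "((\<lambda>s. snd (v s)) has_vector_derivative (- a0\<^sup>2 * L / (2 * norm Y0)) *\<^sub>R Y0) (at 0)"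
proof -
  define w where "w = (- a0\<^sup>2 * L / (2 * norm Y0)) *\<^sub>R Y0"
  have component: "((\<lambda>s. snd (v s) \<bullet> i) has_real_derivative w \<bullet> i) (at 0)" for i
  proof -
    have "Y0 \<bullet> u0 = 0"
      using orth \<open>0 \<in> I\<close> \<open>\<gamma> 0 = (t0, Y0)\<close> \<open>v 0 = (a0, u0)\<close> by force
    then have "1/2 * dmetric m mu (\<gamma> 0) (0, i) (v 0) = w \<bullet> i"
      using dmetric_spatial_direction[of Y0 u0 m mu L t0 i a0] assms(5-9) L
      unfolding w_def by simp
    then have "((\<lambda>s. metric m mu (\<gamma> s) (v s) (0, i)) has_real_derivative w \<bullet> i) (at 0)"
      using geodesic_eq \<open>0 \<in> I\<close> by metis
    moreover have "metric m mu (\<gamma> s) (v s) (0, i) = snd (v s) \<bullet> i" if "s \<in> I" for s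
      using orth that unfolding metric_def Let_def by simp
    ultimately show ?thesis
      by (rule has_field_derivative_transform_within_open[OF _ \<open>open I\<close> \<open>0 \<in> I\<close>])
  qed
  have "(\<lambda>h. (h *\<^sub>R w) \<bullet> i) = (*) (w \<bullet> i)" for i
    by (simp add: fun_eq_iff)
  then have "((\<lambda>s. snd (v s) \<bullet> i) has_derivative (\<lambda>h. (h *\<^sub>R w) \<bullet> i)) (at 0)" for i
    using component[of i] unfolding has_field_derivative_def by simp
  then show ?thesis
    unfolding has_vector_derivative_def w_def[symmetric]
    using has_derivative_componentwise_within[of _ _ 0 UNIV] by blast
qed

lemma geodesic_constant_radius_spatial_speed:
  assumes geo: "geodesic m mu \<gamma> eps" and \<gamma>0: "\<gamma> 0 = (t0, Y0)"
    and k: "(\<gamma> has_vector_derivative (a0, u0)) (at 0)"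
    and radius: "\<forall>s\<in>{-eps<..<eps}. norm (snd (\<gamma> s)) = norm Y0"
    and "isCont m (norm Y0)" "2 * m (norm Y0) \<noteq> norm Y0"
    and L: "(lapse_sq m mu has_real_derivative L) (at (norm Y0))"
  shows "Y0 \<bullet> u0 = 0" and "u0 \<bullet> u0 = a0\<^sup>2 * L * norm Y0 / 2"
proof -
  define I where "I = {-eps<..<eps}"
  obtain v where "eps > 0" and in_M: "\<forall>s\<in>I. \<gamma> s \<in> spacetime"
    and vel: "\<forall>s\<in>I. (\<gamma> has_vector_derivative v s) (at s)"
    and geodesic_eq: "\<forall>s\<in>I. \<forall>w. ((\<lambda>s. metric m mu (\<gamma> s) (v s) w) has_real_derivative
          1/2 * dmetric m mu (\<gamma> s) w (v s)) (at s)"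
    using geo unfolding geodesic_def I_def by blast
  have "open I" "0 \<in> I"
    using \<open>eps > 0\<close> unfolding I_def by auto
  have "Y0 \<noteq> 0"
    using in_M \<open>0 \<in> I\<close> \<gamma>0 unfolding spacetime_def by auto
  have "v 0 = (a0, u0)"
    using vector_derivative_unique_at[OF _ k] vel \<open>0 \<in> I\<close> by blast
  have dY: "((\<lambda>s. snd (\<gamma> s)) has_vector_derivative snd (v s)) (at s)" if "s \<in> I" for s
    using bounded_linear.has_vector_derivative[OF bounded_linear_snd] vel that by blast
  have orth: "\<forall>s\<in>I. snd (\<gamma> s) \<bullet> snd (v s) = 0"
    using constant_norm_orthogonal_velocity[OF \<open>open I\<close> _ _ dY] radius unfolding I_def by blast
  then show "Y0 \<bullet> u0 = 0"
    using \<open>0 \<in> I\<close> \<gamma>0 \<open>v 0 = (a0, u0)\<close> by force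
  define w where "w = (- a0\<^sup>2 * L / (2 * norm Y0)) *\<^sub>R Y0"
  from \<open>open I\<close> \<open>0 \<in> I\<close> geodesic_eq orth \<gamma>0 \<open>v 0 = (a0, u0)\<close> \<open>Y0 \<noteq> 0\<close> assms(5,6) L
  have "((\<lambda>s. snd (v s)) has_vector_derivative w) (at 0)"
    unfolding w_def by (rule geodesic_spatial_velocity_has_vector_derivative)
  with \<open>open I\<close> \<open>0 \<in> I\<close> orth dY[OF \<open>0 \<in> I\<close>]
  have "u0 \<bullet> u0 + Y0 \<bullet> w = 0"
    using orthogonal_velocity_acceleration[of I 0 "\<lambda>s. snd (\<gamma> s)" "\<lambda>s. snd (v s)" w]
    unfolding \<gamma>0 \<open>v 0 = (a0, u0)\<close> by simp
  then show "u0 \<bullet> u0 = a0\<^sup>2 * L * norm Y0 / 2"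
    unfolding w_def using \<open>Y0 \<noteq> 0\<close>
    by (simp add: power2_norm_eq_inner[symmetric] power2_eq_square)
qed

text \<open>Differentiating \<open>y \<bullet> y' = 0\<close> along the geodesic and using \<open>g(k, k) = 0\<close> yields the photon
  sphere condition \<open>2 N\<^sup>2 = r (N\<^sup>2)'\<close> for \<open>N\<^sup>2 = lapse_sq m mu\<close>.\<close>
lemma geodesic_constant_radius_photon_sphere:
  assumes geo: "geodesic m mu \<gamma> eps" and \<gamma>0: "\<gamma> 0 = (t0, Y0)"
    and k: "(\<gamma> has_vector_derivative (a0, u0)) (at 0)" "a0 \<noteq> 0"
    and null: "metric m mu (t0, Y0) (a0, u0) (a0, u0) = 0"
    and radius: "\<forall>s\<in>{-eps<..<eps}. norm (snd (\<gamma> s)) = norm Y0"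
    and m': "(m has_real_derivative deriv m (norm Y0)) (at (norm Y0))"
    and mu': "(mu has_real_derivative deriv mu (norm Y0)) (at (norm Y0))"
    and not_horizon: "2 * m (norm Y0) \<noteq> norm Y0"
  shows "photon_sphere_fn m mu (norm Y0) = 0"
proof -
  let ?r = "norm Y0"
  define L where "L = (2 * m ?r / ?r\<^sup>2 - 2 * deriv m ?r / ?r + (1 - 2 * m ?r / ?r) * deriv mu ?r)
      * exp (mu ?r)"
  have "Y0 \<noteq> 0"
    using geo \<gamma>0 unfolding geodesic_def spacetime_def by force
  then have L: "(lapse_sq m mu has_real_derivative L) (at ?r)"
    unfolding L_def using m' mu' by (intro lapse_sq_has_derivative) auto
  note speed = geodesic_constant_radius_spatial_speed[OF geo \<gamma>0 k(1) radius DERIV_isCont[OF m']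
      not_horizon L]
  then have "u0 \<bullet> u0 = a0\<^sup>2 * lapse_sq m mu ?r"
    using null unfolding metric_def Let_def lapse_sq_def by (simp add: power2_eq_square algebra_simps)
  with speed(2) \<open>a0 \<noteq> 0\<close> have "2 * lapse_sq m mu ?r = ?r * L"
    by (simp add: algebra_simps)
  with \<open>Y0 \<noteq> 0\<close> show ?thesis
    unfolding L_def by (simp add: photon_sphere_fn_eq_0_iff)
qed

theorem theorem6:
  fixes m mu :: "real \<Rightarrow> real"
  assumes reg_m: "C1_on {0<..} m" "piecewise_C2 {0<..} m"
    and reg_mu: "C1_on {0<..} mu" "piecewise_C2 {0<..} mu"
    and fluid: "\<forall>r>0. \<forall>m2 mu2. (deriv m has_real_derivative m2) (at r)
                   \<and> (deriv mu has_real_derivative mu2) (at r)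
                   \<longrightarrow> p1 m mu r = p2 m mu m2 mu2 r"
    and lim_p: "((\<lambda>r. 4 * pi * r\<^sup>2 * p1 m mu r) \<longlongrightarrow> 0) at_top"
    and lim_rho: "((\<lambda>r. 4 * pi * r\<^sup>2 * rho m r) \<longlongrightarrow> 0) at_top"
    and bound: "\<forall>r>0. 24 / 7 * m r < r"
    and energy: "\<forall>r>0. p1 m mu r \<le> rho m r / 3"
  shows "\<not> (\<exists>S. SO3R_invariant S \<and> timelike_photon_surface m mu S)"
proof
  assume "\<exists>S. SO3R_invariant S \<and> timelike_photon_surface m mu S"
  then obtain S where inv: "SO3R_invariant S" and photon: "timelike_photon_surface m mu S"
    by blast
  have subhorizon: "\<forall>r>0. 2 * m r < r"
    using bound by force
  obtain \<gamma> eps t0 Y0 a0 u0 where geo: "geodesic m mu \<gamma> eps" and \<gamma>0: "\<gamma> 0 = (t0, Y0)"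
    and null: "(\<gamma> has_vector_derivative (a0, u0)) (at 0)" "a0 \<noteq> 0"
      "metric m mu (t0, Y0) (a0, u0) (a0, u0) = 0"
    and in_S: "\<gamma> ` {-eps<..<eps} \<subseteq> S"
    using timelike_photon_surface_null_geodesic[OF photon subhorizon] by blast
  have "norm Y0 > 0"
    using geo \<gamma>0 unfolding geodesic_def spacetime_def by force
  have radius: "\<forall>s\<in>{-eps<..<eps}. norm (snd (\<gamma> s)) = norm Y0"
    using SO3R_invariant_photon_surface_geodesic_radius[OF inv photon geo in_S] \<gamma>0 by simp
  have "photon_sphere_fn m mu (norm Y0) = 0"
    using \<open>norm Y0 > 0\<close> subhorizon[rule_format, OF \<open>norm Y0 > 0\<close>]
    by (intro geodesic_constant_radius_photon_sphere[OF geo \<gamma>0 null radius]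
        C1_on_has_derivative[OF reg_m(1)] C1_on_has_derivative[OF reg_mu(1)]) auto
  moreover have "photon_sphere_fn m mu (norm Y0) \<noteq> 0"
    using reg_m reg_mu fluid lim_p bound energy \<open>norm Y0 > 0\<close> by (rule photon_sphere_fn_nonzero)
  ultimately show False
    by contradiction
qed

end
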